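(* Let $n,m,k\ge1$, $C:\{0,1\}^n\to\{0,1\}^m$, $V:\{0,1\}^m\times\{0,1\}^\ell\to\{0,1\}$, $\varepsilon\in(0,1/25]$, $\alpha>1$, $p_H,p_{UH}\in[0,1]$ with $p_H\in[g_H\pm\frac45\sqrt\varepsilon]$ and $p_{UH}\in[g_{UH}\pm10\sqrt\varepsilon]$. Let $y_1,\dots,y_k\in\{0,1\}^m$ be arbitrary, $u:[k]\to\mathbb{Z}_{\ge0}\cup\{\infty\}$, $\mathcal{Y}\subseteq[k]$ and $w_i\in\{0,1\}^\ell$ ($i\in\mathcal{Y}$); let $\mathcal{L}=\{i\in[k]:2^{-(u(i)+1)\varepsilon}<\alpha2^{-m}\}$ and $\mathcal{H}=[k]\setminus\mathcal{L}$. Assume: (a) $|\mathcal{Y}|/k\in[g_{UY}\pm\varepsilon]$; (b) $V(y_i,w_i)=1$ for all $i\in\mathcal{Y}$; (c) $|\mathcal{H}|/k\in[p_{UH}\pm3\sqrt\varepsilon]$; (d) $\frac1k\sum_{i\in\mathcal{L}}2^m2^{-u(i)\varepsilon}\in[1-p_H\pm5\sqrt\varepsilon]$; (1) $\Pr_{y\leftarrow\mathcal{D}^C}[\mathcal{D}^C(y)\in(1\pm4\varepsilon)\alpha2^{-m}]\le\sqrt\varepsilon$; (2) for all $i$: $u'(i)=\infty\Rightarrow u(i)=\infty$; (3) for all $i$: $u(i)=\infty$ or $\mathcal{D}^C(y_i)>(1-\varepsilon/2)2^{-(u(i)+1)\varepsilon}$; (4) $\frac1k|\{i:y_i\in\mathcal{M}\}|<3\sqrt\varepsilon/\alpha$;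 (5) $|\mathcal{Y}'|/k\in[g_{UY}\pm\varepsilon]$; (6) $|\mathcal{H}'|/k\in[g_{UH}\pm3\sqrt\varepsilon]$; (7) $\frac1k\sum_{i\in\mathcal{L}'}2^m2^{-u'(i)\varepsilon}\in[1-g_H\pm5\sqrt\varepsilon]$; (8) $\frac1k\sum_{i\in\mathcal{L}'\cap\mathcal{Y}'}2^m2^{-u'(i)\varepsilon}\in[g_{YL}\pm5\sqrt\varepsilon]$. Then $\frac1k\sum_{i\in\mathcal{L}\cap\mathcal{Y}}2^m2^{-u(i)\varepsilon}\in[g_{YL}\pm112\sqrt\varepsilon\,\alpha]$.
   Context: $\mathcal{D}^C(y)=\Pr_{r\leftarrow\{0,1\}^n}[C(r)=y]$ for uniform $r$. For $y\in\{0,1\}^m$ write $y\in V$ if there is $w$ with $V(y,w)=1$. Let $t=\lceil n/\varepsilon\rceil$, $\mathcal{B}_j=\{y:\mathcal{D}^C(y)\in(2^{-(j+1)\varepsilon},2^{-j\varepsilon}]\}$ for $j\in\{0,\dots,t\}$, and $u'(y)=j$ if $y\in\mathcal{B}_j$, $u'(y)=\infty$ otherwise; conventions $2^{-\infty\varepsilon}=0$, $j<\infty$, $\infty+j=\infty$. $g_H=\Pr_{y\leftarrow\mathcal{D}^C}[\mathcal{D}^C(y)\ge\alpha2^{-m}]$, $g_{UH}=\Pr_{y\text{ uniform}}[\mathcal{D}^C(y)\ge\alpha2^{-m}]$, $g_{UY}=\Pr_{y\text{ uniform}}[y\in V]$, $g_{YL}=\Pr_{y\leftarrow\mathcal{D}^C}[\mathcal{D}^C(y)<\alpha2^{-m}\wedge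 y\in V]$. For the given $y_1,\dots,y_k$: $u'(i):=u'(y_i)$, $\mathcal{Y}'=\{i:y_i\in V\}$, $\mathcal{L}'=\{i:2^{-(u'(i)+1)\varepsilon}<\alpha2^{-m}\}$, $\mathcal{H}'=[k]\setminus\mathcal{L}'$, $\mathcal{M}=\{y:\mathcal{D}^C(y)\in(1\pm4\varepsilon)\alpha2^{-m}\}$. $[a\pm b]=[a-b,a+b]$, $(1\pm\delta)x=[(1-\delta)x,(1+\delta)x]$, $[k]=\{1,\dots,k\}$. *)

theory Defs
  imports "HOL-Analysis.Analysis" "HOL-Library.Extended_Nat"
begin

definition bits :: "nat \<Rightarrow> bool list set" where
  "bits n = {xs. length xs = n}"

definition DC :: "nat \<Rightarrow> (bool list \<Rightarrow> bool list) \<Rightarrow> bool list \<Rightarrow> real" where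
  "DC n C y = real (card {r \<in> bits n. C r = y}) / 2 ^ n"

definition inV :: "nat \<Rightarrow> (bool list \<Rightarrow> bool list \<Rightarrow> bool) \<Rightarrow> bool list \<Rightarrow> bool" where
  "inV l V y \<longleftrightarrow> (\<exists>w \<in> bits l. V y w)"

text \<open>2^{-u eps} with the convention 2^{-\<infinity> eps} = 0.\<close>
definition pw :: "real \<Rightarrow> enat \<Rightarrow> real" where
  "pw eps u = (case u of enat j \<Rightarrow> 2 powr (- (real j * eps)) | \<infinity> \<Rightarrow> 0)"

definition bucket :: "nat \<Rightarrow> (bool list \<Rightarrow> bool list) \<Rightarrow> real \<Rightarrow> nat \<Rightarrow> bool list set" where
  "bucket n C eps j = {y. DC n C y \<in> {2 powr (- (real (j+1) * eps))<..2 powr (- (real j * eps))}}"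

definition uprime :: "nat \<Rightarrow> (bool list \<Rightarrow> bool list) \<Rightarrow> real \<Rightarrow> bool list \<Rightarrow> enat" where
  "uprime n C eps y =
     (if \<exists>j \<le> nat \<lceil>real n / eps\<rceil>. y \<in> bucket n C eps j
      then enat (THE j. j \<le> nat \<lceil>real n / eps\<rceil> \<and> y \<in> bucket n C eps j)
      else \<infinity>)"

definition gH :: "nat \<Rightarrow> nat \<Rightarrow> (bool list \<Rightarrow> bool list) \<Rightarrow> real \<Rightarrow> real" where
  "gH n m C \<alpha> = (\<Sum>y \<in> {y \<in> bits m. DC n C y \<ge> \<alpha> * 2 powr (- real m)}. DC n C y)"

definition gUH :: "nat \<Rightarrow> nat \<Rightarrow> (bool list \<Rightarrow> bool list) \<Rightarrow> real \<Rightarrow> real" where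
  "gUH n m C \<alpha> = real (card {y \<in> bits m. DC n C y \<ge> \<alpha> * 2 powr (- real m)}) / 2 ^ m"

definition gUY :: "nat \<Rightarrow> nat \<Rightarrow> (bool list \<Rightarrow> bool list \<Rightarrow> bool) \<Rightarrow> real" where
  "gUY m l V = real (card {y \<in> bits m. inV l V y}) / 2 ^ m"

definition gYL :: "nat \<Rightarrow> nat \<Rightarrow> nat \<Rightarrow> (bool list \<Rightarrow> bool list) \<Rightarrow> (bool list \<Rightarrow> bool list \<Rightarrow> bool) \<Rightarrow> real \<Rightarrow> real" where
  "gYL n m l C V \<alpha> = (\<Sum>y \<in> {y \<in> bits m. DC n C y < \<alpha> * 2 powr (- real m) \<and> inV l V y}. DC n C y)"

definition Mset :: "nat \<Rightarrow> nat \<Rightarrow> (bool list \<Rightarrow> bool list) \<Rightarrow> real \<Rightarrow> real \<Rightarrow> bool list set" where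
  "Mset n m C eps \<alpha> = {y \<in> bits m. DC n C y \<in> {(1 - 4*eps) * \<alpha> * 2 powr (- real m) .. (1 + 4*eps) * \<alpha> * 2 powr (- real m)}}"

end

theory Submission
  imports Defs
begin

text \<open>On each index, (2) and (3) place D^C(y_i) between (1 - eps/2) 2^(-(u(i)+1) eps) and the
  bucket value 2^(-u'(i) eps). Hence the weight 2^m 2^(-u(i) eps) is at most (1 + 3 eps) times
  2^m 2^(-u'(i) eps), and every index in L' - L has y_i in M. So L' - L is small by (4), L - L' is
  small by comparing (c) with (6), and Y' - Y is small by (a) and (5); every index in these
  differences carries weight at most 2 alpha. The upper bound compares the sum over L \<inter> Y with (8)
  directly. For the lower bound, the sum over L \<inter> Y is the sum over L, given by (d), minus the sum
  over L - Y, and the latter is controlled by the sum over L' - Y', which is (7) minus (8).\<close>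

lemma pw_nonneg: "0 \<le> pw e x"
  by (cases x) (auto simp: pw_def)

lemma pw_plus_one: "pw e (x + 1) = pw e x / 2 powr e"
proof (cases x)
  case (enat j)
  have "- (real (Suc j) * e) = - (real j * e) - e" by (simp add: algebra_simps)
  then show ?thesis using enat by (simp add: pw_def one_enat_def powr_diff)
qed (simp add: pw_def)

lemma two_powr_le_one_plus_twice:
  fixes e :: real
  assumes "0 \<le> e" "e \<le> 1/2"
  shows "2 powr e \<le> 1 + 2 * e"
proof -
  have ln2: "ln (2::real) \<le> 1" using ln_le_minus_one[of 2] by simp
  have "2 powr e = exp (e * ln 2)" by (simp add: powr_def)
  also have "\<dots> \<le> 1 + 2 * (e * ln 2)"
  proof (rule real_exp_bound_lemma)
    show "e * ln 2 \<le> 1/2" using assms ln2 mult_left_mono[OF ln2 assms(1)] by simp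
  qed (use assms in simp)
  also have "\<dots> \<le> 1 + 2 * e" using assms ln2 by (simp add: mult_left_le)
  finally show ?thesis .
qed

lemma bucket_unique:
  assumes "e > 0" "y \<in> bucket n C e i" "y \<in> bucket n C e j"
  shows "i = j"
proof -
  have False if "a < b" "y \<in> bucket n C e a" "y \<in> bucket n C e b" for a b
  proof -
    have "2 powr (- (real b * e)) \<le> 2 powr (- (real (a + 1) * e))"
      using that assms by (intro powr_mono) (auto intro: mult_right_mono)
    moreover have "2 powr (- (real (a + 1) * e)) < DC n C y" "DC n C y \<le> 2 powr (- (real b * e))"
      using that unfolding bucket_def by auto
    ultimately show False by linarith
  qed
  then show ?thesis using assms by (metis linorder_neqE_nat)
qed

lemma DC_le_pw_uprime:
  assumes "uprime n C e y \<noteq> \<infinity>" "e > 0"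
  shows "DC n C y \<le> pw e (uprime n C e y)"
proof -
  let ?t = "nat \<lceil>real n / e\<rceil>"
  obtain j where j: "j \<le> ?t" "y \<in> bucket n C e j"
    using assms(1) unfolding uprime_def by (auto split: if_splits)
  have "(THE j. j \<le> ?t \<and> y \<in> bucket n C e j) = j"
    using j bucket_unique[OF assms(2)] by (intro the_equality) auto
  then have "uprime n C e y = enat j" using j unfolding uprime_def by auto
  then show ?thesis using j(2) unfolding bucket_def by (simp add: pw_def)
qed

lemma pw_le_of_sandwich:
  assumes "0 \<le> e" "e \<le> 1/3" "(1 - e/2) * pw e (u + 1) < d" "d \<le> pw e v"
  shows "pw e u \<le> (1 + 3*e) * pw e v"
proof -
  define q where "q = (2::real) powr e"
  have q: "0 < q" "q \<le> 1 + 2*e" using two_powr_le_one_plus_twice assms by (auto simp: q_def)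
  have "(1 - e/2) * pw e u = q * ((1 - e/2) * pw e (u + 1))"
    using q by (simp add: pw_plus_one q_def)
  also have "\<dots> \<le> q * pw e v" using assms q by (intro mult_left_mono) auto
  also have "\<dots> \<le> (1 + 2*e) * pw e v" using q pw_nonneg by (intro mult_right_mono) auto
  also have "\<dots> \<le> (1 - e/2) * ((1 + 3*e) * pw e v)"
  proof -
    have "(1 - e/2) * (1 + 3*e) = 1 + 2*e + e * (1/2 - 3/2 * e)" by (simp add: algebra_simps)
    moreover have "0 \<le> e * (1/2 - 3/2 * e)" using assms by simp
    ultimately show ?thesis using pw_nonneg[of e v] by (simp add: mult.assoc[symmetric] mult_right_mono)
  qed
  finally show ?thesis using assms by simp
qed

lemma mem_window_of_sandwich:
  assumes "0 \<le> e" "e \<le> 1/2" "(1 - e/2) * pw e (u + 1) < d" "d \<le> pw e v"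
    and "pw e (v + 1) < t" "t \<le> pw e (u + 1)"
  shows "d \<in> {(1 - 4*e) * t .. (1 + 4*e) * t}"
  unfolding atLeastAtMost_iff
proof
  have "0 \<le> t" using assms(5) pw_nonneg[of e "v + 1"] by simp
  then have "(1 - 4*e) * t \<le> (1 - e/2) * t" using assms by (intro mult_right_mono) auto
  also have "\<dots> \<le> (1 - e/2) * pw e (u + 1)" using assms by (intro mult_left_mono) auto
  finally show "(1 - 4*e) * t \<le> d" using assms(3) by simp
next
  define q where "q = (2::real) powr e"
  have q: "0 < q" "q \<le> 1 + 2*e" using two_powr_le_one_plus_twice assms by (auto simp: q_def)
  have "0 \<le> t" using assms(5) pw_nonneg[of e "v + 1"] by simp
  have "d \<le> q * pw e (v + 1)" using assms(4) q by (simp add: pw_plus_one q_def)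
  also have "\<dots> \<le> q * t" using assms q by (intro mult_left_mono) auto
  also have "\<dots> \<le> (1 + 4*e) * t" using q \<open>0 \<le> t\<close> assms by (intro mult_right_mono) auto
  finally show "d \<le> (1 + 4*e) * t" .
qed

lemma pw_le_pw_uprime:
  assumes "0 < e" "e \<le> 1/3" "uprime n C e y = \<infinity> \<longrightarrow> v = \<infinity>"
    and "v = \<infinity> \<or> (1 - e/2) * pw e (v + 1) < DC n C y"
  shows "pw e v \<le> (1 + 3*e) * pw e (uprime n C e y)"
proof (cases "v = \<infinity>")
  case False
  then have "DC n C y \<le> pw e (uprime n C e y)" using assms(1,3) DC_le_pw_uprime by blast
  then show ?thesis using False assms by (intro pw_le_of_sandwich) auto
qed (use assms pw_nonneg in \<open>simp add: pw_def\<close>)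

lemma DC_mem_window_uprime:
  assumes "0 < e" "e \<le> 1/2" "uprime n C e y = \<infinity> \<longrightarrow> v = \<infinity>"
    and "v = \<infinity> \<or> (1 - e/2) * pw e (v + 1) < DC n C y"
    and "pw e (uprime n C e y + 1) < t" "t \<le> pw e (v + 1)" "0 < t"
  shows "DC n C y \<in> {(1 - 4*e) * t .. (1 + 4*e) * t}"
proof -
  have "v \<noteq> \<infinity>"
  proof
    assume "v = \<infinity>"
    then show False using assms(6,7) by (simp add: pw_def)
  qed
  then have "DC n C y \<le> pw e (uprime n C e y)" using assms(1,3) DC_le_pw_uprime by blast
  then show ?thesis using \<open>v \<noteq> \<infinity>\<close> assms by (intro mem_window_of_sandwich) auto
qed

lemma pw_below_threshold:
  assumes "pw e (x + 1) < \<alpha> * 2 powr (- real m)" "0 \<le> e" "e \<le> 1"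
  shows "2 ^ m * pw e x \<le> 2 * \<alpha>"
proof -
  have m: "2 ^ m * 2 powr (- real m) = (1::real)"
    by (simp add: powr_minus powr_realpow)
  have "0 < \<alpha> * 2 powr (- real m)" using assms(1) pw_nonneg[of e "x + 1"] by linarith
  then have "0 < \<alpha>" using zero_less_mult_pos2 by fastforce
  have "2 ^ m * pw e x = 2 powr e * (2 ^ m * pw e (x + 1))" by (simp add: pw_plus_one)
  also have "\<dots> \<le> 2 powr e * \<alpha>"
    using assms(1) mult_strict_left_mono[OF assms(1), of "2 ^ m"] m
    by (intro mult_left_mono) (auto simp: mult.assoc mult.left_commute)
  also have "\<dots> \<le> 2 * \<alpha>"
    using \<open>0 < \<alpha>\<close> assms powr_mono[of e 1 2] by (intro mult_right_mono) auto
  finally show ?thesis .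
qed

lemma real_card_Diff_eq_complements:
  assumes "finite I" "L \<subseteq> I" "L' \<subseteq> I"
  shows "real (card (L - L')) = real (card (I - L')) - real (card (I - L)) + real (card (L' - L))"
proof -
  have fin: "finite L" "finite L'" using assms finite_subset by auto
  have "card L = card (L \<inter> L') + card (L - L')" "card L' = card (L \<inter> L') + card (L' - L)"
    using card_Int_Diff[OF fin(1), of L'] card_Int_Diff[OF fin(2), of L] by (simp_all add: Int_commute)
  moreover have "card L \<le> card I" "card L' \<le> card I" using assms by (simp_all add: card_mono)
  ultimately show ?thesis using assms fin by (simp add: card_Diff_subset of_nat_diff)
qed

lemma divide_mem_atLeastAtMost_iff:
  fixes K S a b :: real
  assumes "K > 0"
  shows "S / K \<in> {a..b} \<longleftrightarrow> a * K \<le> S \<and> S \<le> b * K"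
  using assms by (auto simp: field_simps)

lemma sum_Int_le_sum_Int:
  fixes A B :: "'a \<Rightarrow> real" and c T :: real
  assumes "finite L" "finite L'" "Y \<subseteq> Y'" "0 \<le> c" "0 \<le> T"
    and "\<forall>i\<in>L. A i \<le> T" "\<forall>i\<in>L \<inter> L'. A i \<le> c * B i" "\<forall>i\<in>L'. 0 \<le> B i"
  shows "(\<Sum>i\<in>L \<inter> Y. A i) \<le> c * (\<Sum>i\<in>L' \<inter> Y'. B i) + card (L - L') * T"
proof -
  have "(\<Sum>i\<in>L \<inter> Y. A i) = (\<Sum>i\<in>L \<inter> Y \<inter> L'. A i) + (\<Sum>i\<in>L \<inter> Y - L'. A i)"
    using assms(1) by (simp add: sum.Int_Diff)
  also have "(\<Sum>i\<in>L \<inter> Y \<inter> L'. A i) \<le> (\<Sum>i\<in>L \<inter> Y \<inter> L'. c * B i)"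
    using assms(7) by (intro sum_mono) auto
  also have "\<dots> \<le> (\<Sum>i\<in>L' \<inter> Y'. c * B i)"
    using assms by (intro sum_mono2) auto
  also have "(\<Sum>i\<in>L \<inter> Y - L'. A i) \<le> card (L \<inter> Y - L') * T"
    using assms(6) by (intro sum_bounded_above) auto
  also have "\<dots> \<le> card (L - L') * T"
    using assms(1,5) by (intro mult_right_mono) (auto intro: card_mono)
  finally show ?thesis by (simp add: sum_distrib_left)
qed

lemma sum_le_sum_Int_plus_sum_Diff:
  fixes A B :: "'a \<Rightarrow> real" and c T :: real
  assumes "finite L" "finite L'" "0 \<le> c" "0 \<le> T"
    and "\<forall>i\<in>L. A i \<le> T" "\<forall>i\<in>L \<inter> L'. A i \<le> c * B i" "\<forall>i\<in>L'. 0 \<le> B i"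
  shows "(\<Sum>i\<in>L. A i) \<le> (\<Sum>i\<in>L \<inter> Y. A i) + c * (\<Sum>i\<in>L' - Y. B i) + card (L - L') * T"
proof -
  have "(\<Sum>i\<in>L. A i) = (\<Sum>i\<in>L \<inter> Y. A i) + (\<Sum>i\<in>L - Y. A i)"
    using assms(1) by (simp add: sum.Int_Diff)
  moreover have "(\<Sum>i\<in>L - Y. A i) \<le> c * (\<Sum>i\<in>L' - Y. B i) + card (L - L') * T"
    using sum_Int_le_sum_Int[of L L' "- Y" "- Y" c T A B] assms by (simp add: Diff_eq)
  ultimately show ?thesis by simp
qed

lemma sum_Diff_plus_sum_Int_le:
  fixes B :: "'a \<Rightarrow> real" and T :: real
  assumes "finite L'" "finite Y'" "0 \<le> T" "\<forall>i\<in>L'. 0 \<le> B i \<and> B i \<le> T"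
  shows "(\<Sum>i\<in>L' - Y. B i) + (\<Sum>i\<in>L' \<inter> Y'. B i) \<le> (\<Sum>i\<in>L'. B i) + card (Y' - Y) * T"
proof -
  have "(\<Sum>i\<in>L'. B i) = (\<Sum>i\<in>L' \<inter> Y. B i) + (\<Sum>i\<in>L' - Y. B i)"
    using assms(1) by (simp add: sum.Int_Diff)
  moreover have "(\<Sum>i\<in>L' \<inter> Y'. B i) \<le> (\<Sum>i\<in>L' \<inter> Y. B i) + card (Y' - Y) * T"
  proof -
    have "(\<Sum>i\<in>L' \<inter> Y'. B i) = (\<Sum>i\<in>L' \<inter> Y' \<inter> Y. B i) + (\<Sum>i\<in>L' \<inter> Y' - Y. B i)"
      using assms(1) by (simp add: sum.Int_Diff)
    also have "(\<Sum>i\<in>L' \<inter> Y' \<inter> Y. B i) \<le> (\<Sum>i\<in>L' \<inter> Y. B i)"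
      using assms by (intro sum_mono2) auto
    also have "(\<Sum>i\<in>L' \<inter> Y' - Y. B i) \<le> card (L' \<inter> Y' - Y) * T"
      using assms(4) by (intro sum_bounded_above) auto
    also have "\<dots> \<le> card (Y' - Y) * T"
      using assms(2,3) by (intro mult_right_mono) (auto intro: card_mono)
    finally show ?thesis by simp
  qed
  ultimately show ?thesis by simp
qed

text \<open>In the application A and B are the weights 2^m 2^(-u(i) eps) and 2^m 2^(-u'(i) eps), and
  s = sqrt eps.\<close>

context
  fixes L L' :: "'a set" and A B :: "'a \<Rightarrow> real" and K e s \<alpha> :: real
  assumes fin: "finite L" "finite L'" and card_L': "real (card L') \<le> K"
    and A_le: "\<forall>i\<in>L. A i \<le> 2 * \<alpha>" and B_bounds: "\<forall>i\<in>L'. 0 \<le> B i \<and> B i \<le> 2 * \<alpha>"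
    and A_le_B: "\<forall>i\<in>L \<inter> L'. A i \<le> (1 + 3*e) * B i"
    and card_L_L': "real (card (L - L')) \<le> 19 * s * K"
    and e: "0 \<le> e" "e \<le> s / 5" and alpha: "1 \<le> \<alpha>"
begin

private lemma scale_bounds: "0 \<le> s" "0 \<le> K" "s * K \<le> s * K * \<alpha>" "0 \<le> s * K * \<alpha>"
proof -
  show "0 \<le> s" "0 \<le> K" using e card_L' of_nat_0_le_iff[of "card L'"] by linarith+
  then show "s * K \<le> s * K * \<alpha>" "0 \<le> s * K * \<alpha>"
    using alpha mult_left_mono[OF alpha, of "s * K"] by simp_all
qed

private lemma eps_times_le_sum_B:
  assumes "0 \<le> X" "X \<le> (\<Sum>i\<in>L'. B i)"
  shows "e * X \<le> 2/5 * (s * K * \<alpha>)"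
proof -
  have "(\<Sum>i\<in>L'. B i) \<le> card L' * (2 * \<alpha>)" using B_bounds by (intro sum_bounded_above) auto
  also have "\<dots> \<le> K * (2 * \<alpha>)" using card_L' alpha by (intro mult_right_mono) auto
  finally have "e * X \<le> s / 5 * (K * (2 * \<alpha>))" using assms e by (intro mult_mono) auto
  then show ?thesis by simp
qed

private lemma card_Diff_weight_le: "card (L - L') * (2 * \<alpha>) \<le> 38 * (s * K * \<alpha>)"
  using mult_right_mono[OF card_L_L', of "2 * \<alpha>"] alpha by simp

lemma sum_Int_upper_estimate:
  assumes "Y \<subseteq> Y'" "(\<Sum>i\<in>L' \<inter> Y'. B i) \<le> (G + 5 * s) * K"
  shows "(\<Sum>i\<in>L \<inter> Y. A i) \<le> G * K + 45 * (s * K * \<alpha>)"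
proof -
  have "(\<Sum>i\<in>L \<inter> Y. A i) \<le> (1 + 3 * e) * (\<Sum>i\<in>L' \<inter> Y'. B i) + card (L - L') * (2 * \<alpha>)"
    using fin assms(1) A_le A_le_B B_bounds e alpha by (intro sum_Int_le_sum_Int) auto
  moreover have "e * (\<Sum>i\<in>L' \<inter> Y'. B i) \<le> 2/5 * (s * K * \<alpha>)"
    using fin B_bounds by (intro eps_times_le_sum_B sum_nonneg sum_mono2) auto
  moreover have "(1 + 3 * e) * (\<Sum>i\<in>L' \<inter> Y'. B i)
      = (\<Sum>i\<in>L' \<inter> Y'. B i) + 3 * (e * (\<Sum>i\<in>L' \<inter> Y'. B i))"
    by (simp add: algebra_simps)
  moreover have "(G + 5 * s) * K = G * K + 5 * (s * K)" by (simp add: algebra_simps)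
  ultimately show ?thesis
    using assms(2) scale_bounds card_Diff_weight_le by linarith
qed

lemma sum_Int_lower_estimate:
  assumes "finite Y'" "real (card (Y' - Y)) \<le> 2 * e * K"
    and "(1 - p - 5 * s) * K \<le> (\<Sum>i\<in>L. A i)" "(\<Sum>i\<in>L'. B i) \<le> (1 - g + 5 * s) * K"
    and "p \<le> g + 4/5 * s" "(G - 5 * s) * K \<le> (\<Sum>i\<in>L' \<inter> Y'. B i)"
  shows "G * K - 56 * (s * K * \<alpha>) \<le> (\<Sum>i\<in>L \<inter> Y. A i)"
proof -
  have "(\<Sum>i\<in>L. A i)
      \<le> (\<Sum>i\<in>L \<inter> Y. A i) + (1 + 3 * e) * (\<Sum>i\<in>L' - Y. B i) + card (L - L') * (2 * \<alpha>)"
    using fin A_le A_le_B B_bounds e alpha by (intro sum_le_sum_Int_plus_sum_Diff) auto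
  moreover have "(\<Sum>i\<in>L' - Y. B i) + (\<Sum>i\<in>L' \<inter> Y'. B i)
      \<le> (\<Sum>i\<in>L'. B i) + card (Y' - Y) * (2 * \<alpha>)"
    using fin assms(1) B_bounds alpha by (intro sum_Diff_plus_sum_Int_le) auto
  moreover have "card (Y' - Y) * (2 * \<alpha>) \<le> 4/5 * (s * K * \<alpha>)"
  proof -
    have "real (card (Y' - Y)) \<le> 2 * (s / 5) * K"
      using assms(2) mult_right_mono[OF e(2) scale_bounds(2)] by linarith
    then have "card (Y' - Y) * (2 * \<alpha>) \<le> (2 * (s / 5) * K) * (2 * \<alpha>)"
      using alpha by (intro mult_right_mono) auto
    then show ?thesis by simp
  qed
  moreover have "e * (\<Sum>i\<in>L' - Y. B i) \<le> 2/5 * (s * K * \<alpha>)"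
    using fin B_bounds by (intro eps_times_le_sum_B sum_nonneg sum_mono2) auto
  moreover have "(1 + 3 * e) * (\<Sum>i\<in>L' - Y. B i)
      = (\<Sum>i\<in>L' - Y. B i) + 3 * (e * (\<Sum>i\<in>L' - Y. B i))"
    by (simp add: algebra_simps)
  moreover have "- (4/5 * s) * K \<le> (g - p) * K"
    using assms(5) scale_bounds(2) by (intro mult_right_mono) auto
  moreover have "(1 - p - 5 * s) * K - (1 - g + 5 * s) * K + (G - 5 * s) * K
      = (g - p) * K + G * K - 15 * (s * K)" "- (4/5 * s) * K = - 4/5 * (s * K)"
    by (simp_all add: algebra_simps)
  ultimately show ?thesis
    using assms(3,4,6) scale_bounds card_Diff_weight_le by linarith
qed

end

theorem mainTheorem9:
  fixes n m k l :: nat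
    and C :: "bool list \<Rightarrow> bool list"
    and V :: "bool list \<Rightarrow> bool list \<Rightarrow> bool"
    and eps \<alpha> pH pUH :: real
    and y w :: "nat \<Rightarrow> bool list"
    and u :: "nat \<Rightarrow> enat"
    and Y :: "nat set"
  defines "L \<equiv> {i \<in> {1..k}. pw eps (u i + 1) < \<alpha> * 2 powr (- real m)}"
    and "H \<equiv> {1..k} - {i \<in> {1..k}. pw eps (u i + 1) < \<alpha> * 2 powr (- real m)}"
    and "Y' \<equiv> {i \<in> {1..k}. inV l V (y i)}"
    and "L' \<equiv> {i \<in> {1..k}. pw eps (uprime n C eps (y i) + 1) < \<alpha> * 2 powr (- real m)}"
    and "H' \<equiv> {1..k} - {i \<in> {1..k}. pw eps (uprime n C eps (y i) + 1) < \<alpha> * 2 powr (- real m)}"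
  assumes n: "n \<ge> 1" and m: "m \<ge> 1" and k: "k \<ge> 1"
    and C: "\<forall>r \<in> bits n. C r \<in> bits m"
    and eps: "0 < eps" "eps \<le> 1/25"
    and alpha: "\<alpha> > 1"
    and pH: "0 \<le> pH" "pH \<le> 1"
      "pH \<in> {gH n m C \<alpha> - 4/5 * sqrt eps .. gH n m C \<alpha> + 4/5 * sqrt eps}"
    and pUH: "0 \<le> pUH" "pUH \<le> 1"
      "pUH \<in> {gUH n m C \<alpha> - 10 * sqrt eps .. gUH n m C \<alpha> + 10 * sqrt eps}"
    and y: "\<forall>i \<in> {1..k}. y i \<in> bits m"
    and Ysub: "Y \<subseteq> {1..k}"
    and w: "\<forall>i \<in> Y. w i \<in> bits l"
    and a: "real (card Y) / k \<in> {gUY m l V - eps .. gUY m l V + eps}"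
    and b: "\<forall>i \<in> Y. V (y i) (w i)"
    and c: "real (card H) / k \<in> {pUH - 3 * sqrt eps .. pUH + 3 * sqrt eps}"
    and d: "(1 / k) * (\<Sum>i \<in> L. 2 ^ m * pw eps (u i))
              \<in> {1 - pH - 5 * sqrt eps .. 1 - pH + 5 * sqrt eps}"
    and h1: "(\<Sum>z \<in> Mset n m C eps \<alpha>. DC n C z) \<le> sqrt eps"
    and h2: "\<forall>i \<in> {1..k}. uprime n C eps (y i) = \<infinity> \<longrightarrow> u i = \<infinity>"
    and h3: "\<forall>i \<in> {1..k}. u i = \<infinity> \<or> DC n C (y i) > (1 - eps / 2) * pw eps (u i + 1)"
    and h4: "real (card {i \<in> {1..k}. y i \<in> Mset n m C eps \<alpha>}) / k < 3 * sqrt eps / \<alpha>"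
    and h5: "real (card Y') / k \<in> {gUY m l V - eps .. gUY m l V + eps}"
    and h6: "real (card H') / k \<in> {gUH n m C \<alpha> - 3 * sqrt eps .. gUH n m C \<alpha> + 3 * sqrt eps}"
    and h7: "(1 / k) * (\<Sum>i \<in> L'. 2 ^ m * pw eps (uprime n C eps (y i)))
              \<in> {1 - gH n m C \<alpha> - 5 * sqrt eps .. 1 - gH n m C \<alpha> + 5 * sqrt eps}"
    and h8: "(1 / k) * (\<Sum>i \<in> L' \<inter> Y'. 2 ^ m * pw eps (uprime n C eps (y i)))
              \<in> {gYL n m l C V \<alpha> - 5 * sqrt eps .. gYL n m l C V \<alpha> + 5 * sqrt eps}"
  shows "(1 / k) * (\<Sum>i \<in> L \<inter> Y. 2 ^ m * pw eps (u i))
           \<in> {gYL n m l C V \<alpha> - 112 * sqrt eps * \<alpha> .. gYL n m l C V \<alpha> + 112 * sqrt eps * \<alpha>}"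
proof -
  define s where "s = sqrt eps"
  define K where "K = real k"
  define A where "A = (\<lambda>i. 2 ^ m * pw eps (u i))"
  define B where "B = (\<lambda>i. 2 ^ m * pw eps (uprime n C eps (y i)))"
  have K: "K > 0" using k by (simp add: K_def)
  have s: "0 < s" "eps \<le> s / 5"
  proof -
    show "0 < s" using eps by (simp add: s_def)
    moreover have "eps = s * s" "s \<le> 1/5"
      using eps real_sqrt_le_mono[of eps "1/25"] by (auto simp: s_def real_sqrt_divide)
    ultimately show "eps \<le> s / 5" by (simp add: mult_left_mono)
  qed
  have sub: "L \<subseteq> {1..k}" "L' \<subseteq> {1..k}" "Y \<subseteq> Y'"
    using Ysub b w by (auto simp: L_def L'_def Y'_def inV_def)
  then have fin: "finite L" "finite L'" "finite Y'"
    by (auto simp: Y'_def intro: finite_subset)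
  have hyps_u: "uprime n C eps (y i) = \<infinity> \<longrightarrow> u i = \<infinity>"
      "u i = \<infinity> \<or> (1 - eps/2) * pw eps (u i + 1) < DC n C (y i)" if "i \<in> L \<union> L'" for i
    using that sub h2 h3 by force+
  have AB: "\<forall>i\<in>L \<inter> L'. A i \<le> (1 + 3*eps) * B i"
    using hyps_u eps pw_le_pw_uprime by (simp add: A_def B_def)
  have A_le: "\<forall>i\<in>L. A i \<le> 2 * \<alpha>" and B_le: "\<forall>i\<in>L'. 0 \<le> B i \<and> B i \<le> 2 * \<alpha>"
    using pw_below_threshold eps pw_nonneg by (auto simp: A_def B_def L_def L'_def)
  have "L' - L \<subseteq> {i \<in> {1..k}. y i \<in> Mset n m C eps \<alpha>}"
  proof
    fix i assume i: "i \<in> L' - L"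
    then have "DC n C (y i)
        \<in> {(1 - 4*eps) * (\<alpha> * 2 powr (- real m)) .. (1 + 4*eps) * (\<alpha> * 2 powr (- real m))}"
      using hyps_u[of i] eps alpha by (intro DC_mem_window_uprime) (auto simp: L_def L'_def)
    then show "i \<in> {i \<in> {1..k}. y i \<in> Mset n m C eps \<alpha>}"
      using i sub y by (auto simp: Mset_def mult.assoc)
  qed
  then have "real (card (L' - L)) \<le> real (card {i \<in> {1..k}. y i \<in> Mset n m C eps \<alpha>})"
    by (intro of_nat_mono card_mono) auto
  also have "\<dots> \<le> 3 * s / \<alpha> * K" using h4 K by (simp add: s_def K_def field_simps)
  also have "\<dots> \<le> 3 * s * K" using alpha s K by (simp add: field_simps)
  finally have card_L'_L: "real (card (L' - L)) \<le> 3 * s * K" .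
  have card_L_L': "real (card (L - L')) \<le> 19 * s * K"
  proof -
    have "(pUH - 3 * s) * K \<le> real (card H)" "real (card H') \<le> (gUH n m C \<alpha> + 3 * s) * K"
      using c[folded K_def s_def] h6[folded K_def s_def] unfolding divide_mem_atLeastAtMost_iff[OF K]
      by auto
    moreover have "(gUH n m C \<alpha> - 10 * s) * K \<le> pUH * K" using pUH K by (simp add: s_def)
    moreover have "H = {1..k} - L" "H' = {1..k} - L'" by (auto simp: H_def H'_def L_def L'_def)
    ultimately show ?thesis
      using real_card_Diff_eq_complements[of "{1..k}" L L'] sub card_L'_L by (simp add: algebra_simps)
  qed
  have card_Y'_Y: "real (card (Y' - Y)) \<le> 2 * eps * K"
  proof -
    have "(gUY m l V - eps) * K \<le> card Y" "card Y' \<le> (gUY m l V + eps) * K"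
      using a[folded K_def] h5[folded K_def] unfolding divide_mem_atLeastAtMost_iff[OF K] by auto
    moreover have "finite Y" using fin(3) sub(3) finite_subset by blast
    ultimately show ?thesis
      using card_Diff_subset[of Y Y'] card_mono[of Y' Y] fin(3) sub(3)
      by (simp add: of_nat_diff algebra_simps)
  qed
  have card_L': "real (card L') \<le> K" using card_mono[OF _ sub(2)] by (simp add: K_def)
  have sums: "(1 - pH - 5 * s) * K \<le> (\<Sum>i\<in>L. A i)"
      "(\<Sum>i\<in>L'. B i) \<le> (1 - gH n m C \<alpha> + 5 * s) * K"
      "(gYL n m l C V \<alpha> - 5 * s) * K \<le> (\<Sum>i\<in>L' \<inter> Y'. B i)"
      "(\<Sum>i\<in>L' \<inter> Y'. B i) \<le> (gYL n m l C V \<alpha> + 5 * s) * K"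
    using d[folded A_def K_def s_def] h7[folded B_def K_def s_def] h8[folded B_def K_def s_def]
    unfolding times_divide_eq_left mult_1 divide_mem_atLeastAtMost_iff[OF K] by auto
  have "pH \<le> gH n m C \<alpha> + 4/5 * s" using pH(3) by (simp add: s_def)
  then have "(gYL n m l C V \<alpha> - 112 * s * \<alpha>) * K \<le> (\<Sum>i\<in>L \<inter> Y. A i)
      \<and> (\<Sum>i\<in>L \<inter> Y. A i) \<le> (gYL n m l C V \<alpha> + 112 * s * \<alpha>) * K"
    using sum_Int_upper_estimate[OF fin(1,2) card_L' A_le B_le AB card_L_L' _ s(2) _ sub(3) sums(4)]
      sum_Int_lower_estimate[OF fin(1,2) card_L' A_le B_le AB card_L_L' _ s(2) _ fin(3) card_Y'_Y
        sums(1,2) _ sums(3)]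
      eps alpha s K mult_nonneg_nonneg[of "s * K" \<alpha>]
    by (auto simp: algebra_simps)
  then show ?thesis
    unfolding times_divide_eq_left mult_1 K_def[symmetric] divide_mem_atLeastAtMost_iff[OF K]
    by (simp add: A_def s_def)
qed

end
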